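(* Let q₁, …, qₙ, q, p be terms in the language of strong quasi-Wajsberg* algebras. Then: (1) if q₁, …, qₙ ⊨_SQW* q, then q₁, …, qₙ ⊨_W* q; (2) q₁, …, qₙ ⊨_W* q iff q₁, …, qₙ ⊨_SQW* (p→p)→q; (3) if q is regular, then q₁, …, qₙ ⊨_W* q iff q₁, …, qₙ ⊨_SQW* q.
   Context: A quasi-Wajsberg* algebra is an algebra ⟨W; →, ¬, ⁺, ⁻, 1⟩ of type ⟨2,1,1,1,0⟩ satisfying: x→y = ¬y→¬x; (x→1)→((y→1)→z) = (y→1)→((x→1)→z); (1→x)→1 = 1; (z→z)→(x→y) = x→y; (1→1)→x⁺ = ((1→1)→x)⁺ = (x→1)→1 and (1→1)→x⁻ = ((1→1)→x)⁻ = (x→¬1)→¬1; x→y = (y⁺→x⁻)→(x⁺→y⁻); ¬(x→y) = y→x; ¬¬x = x; (x→(¬x→y))⁺ = x⁺→(¬x⁺→y⁺); x∨y = y∨x; x∨(y∨z) = (x∨y)∨z; x→(y∨z) = (x→y)∨(x→z); where x∨y = ((x⁺→y⁺)⁺→(¬x)⁻)→((y⁻→x⁻)⁻→x⁻). A strong quasi-Wajsberg* algebra is a quasi-Wajsberg* algebra satisfying x⁺ = (1→1)→x⁺ and x⁻ = (1→1)→x⁻; SQW* denotes the variety of these. A Wajsberg* algebra is an algebra ⟨M; →, ¬, 1⟩ satisfying the analogous axioms with (y→y)→x = x, where x⁺ = (x→1)→1, x⁻ = (x→¬1)→¬1; W* denotes this variety, and W* ⊆ SQW*. A term is regular if it contains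 → or 1 (non-regular terms are ¬ⁿp, p a variable). For a class K ∈ {SQW*, W*} and terms t₁, …, tₙ, t, with c₁, …, cₙ, c constants (added if needed) denoting designated elements: t₁, …, tₙ ⊨_K t iff K ⊨ (t₁ ≈ (c₁→1)→1 & … & tₙ ≈ (cₙ→1)→1 ⇒ t ≈ (c→1)→1). *)

theory Defs
  imports Main
begin

datatype trm = Var nat | Imp trm trm | Neg trm | Pos trm | Mns trm | One

fun regular :: "trm \<Rightarrow> bool" where
  "regular (Var _) = False"
| "regular (Neg t) = regular t"
| "regular _ = True"

record 'a qw =
  carrier :: "'a set"
  imp :: "'a \<Rightarrow> 'a \<Rightarrow> 'a"
  neg :: "'a \<Rightarrow> 'a"
  pos :: "'a \<Rightarrow> 'a"
  mns :: "'a \<Rightarrow> 'a"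
  one :: "'a"

definition qjoin :: "'a qw \<Rightarrow> 'a \<Rightarrow> 'a \<Rightarrow> 'a" where
  "qjoin A x y =
     imp A (imp A (pos A (imp A (pos A x) (pos A y))) (mns A (neg A x)))
           (imp A (mns A (imp A (mns A y) (mns A x))) (mns A x))"

definition qwstar :: "'a qw \<Rightarrow> bool" where
  "qwstar A \<longleftrightarrow>
    one A \<in> carrier A \<and>
    (\<forall>x\<in>carrier A. \<forall>y\<in>carrier A. imp A x y \<in> carrier A) \<and>
    (\<forall>x\<in>carrier A. neg A x \<in> carrier A \<and> pos A x \<in> carrier A \<and> mns A x \<in> carrier A) \<and>
    (\<forall>x\<in>carrier A. \<forall>y\<in>carrier A. \<forall>z\<in>carrier A.
      imp A x y = imp A (neg A y) (neg A x) \<and>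
      imp A (imp A x (one A)) (imp A (imp A y (one A)) z)
        = imp A (imp A y (one A)) (imp A (imp A x (one A)) z) \<and>
      imp A (imp A (one A) x) (one A) = one A \<and>
      imp A (imp A z z) (imp A x y) = imp A x y \<and>
      imp A (imp A (one A) (one A)) (pos A x) = pos A (imp A (imp A (one A) (one A)) x) \<and>
      pos A (imp A (imp A (one A) (one A)) x) = imp A (imp A x (one A)) (one A) \<and>
      imp A (imp A (one A) (one A)) (mns A x) = mns A (imp A (imp A (one A) (one A)) x) \<and>
      mns A (imp A (imp A (one A) (one A)) x) = imp A (imp A x (neg A (one A))) (neg A (one A)) \<and>
      imp A x y = imp A (imp A (pos A y) (mns A x)) (imp A (pos A x) (mns A y)) \<and>
      neg A (imp A x y) = imp A y x \<and>
      neg A (neg A x) = x \<and>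
      pos A (imp A x (imp A (neg A x) y)) = imp A (pos A x) (imp A (neg A (pos A x)) (pos A y)) \<and>
      qjoin A x y = qjoin A y x \<and>
      qjoin A x (qjoin A y z) = qjoin A (qjoin A x y) z \<and>
      imp A x (qjoin A y z) = qjoin A (imp A x y) (imp A x z))"

definition sqwstar :: "'a qw \<Rightarrow> bool" where
  "sqwstar A \<longleftrightarrow> qwstar A \<and>
    (\<forall>x\<in>carrier A. pos A x = imp A (imp A (one A) (one A)) (pos A x) \<and>
                   mns A x = imp A (imp A (one A) (one A)) (mns A x))"

text \<open>In presence of this law the axioms force pos x = (x->1)->1 and mns x = (x->~1)->~1,
  i.e. the unary operations are the defined ones.\<close>
definition wstar :: "'a qw \<Rightarrow> bool" where
  "wstar A \<longleftrightarrow> qwstar A \<and>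
    (\<forall>x\<in>carrier A. \<forall>y\<in>carrier A. imp A (imp A y y) x = x)"

fun eval :: "'a qw \<Rightarrow> (nat \<Rightarrow> 'a) \<Rightarrow> trm \<Rightarrow> 'a" where
  "eval A v (Var n) = v n"
| "eval A v (Imp s t) = imp A (eval A v s) (eval A v t)"
| "eval A v (Neg t) = neg A (eval A v t)"
| "eval A v (Pos t) = pos A (eval A v t)"
| "eval A v (Mns t) = mns A (eval A v t)"
| "eval A v One = one A"

definition designated :: "'a qw \<Rightarrow> 'a \<Rightarrow> bool" where
  "designated A a \<longleftrightarrow> (\<exists>c\<in>carrier A. a = imp A (imp A c (one A)) (one A))"

text \<open>ts |=_K t, relative to the algebras of K on carrier type 'a.\<close>
definition conseq :: "('a qw \<Rightarrow> bool) \<Rightarrow> trm list \<Rightarrow> trm \<Rightarrow> bool" where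
  "conseq K ts t \<longleftrightarrow>
    (\<forall>A v. K A \<and> (\<forall>n. v n \<in> carrier A) \<and> (\<forall>s\<in>set ts. designated A (eval A v s))
       \<longrightarrow> designated A (eval A v t))"

end

theory Submission
  imports Defs
begin

(* For an algebra A in SQW*, the map x \<mapsto> (1\<rightarrow>1)\<rightarrow>x is a homomorphism of A onto its image,
   the regular part of A, which is a W*-algebra: the W*-law (y\<rightarrow>y)\<rightarrow>x = x holds there
   because every element of the image is an implication.  The map fixes designated elements
   and the values of regular terms, and (p\<rightarrow>p)\<rightarrow>q evaluates to the image of q.  Hence a
   valuation in A refuting (p\<rightarrow>p)\<rightarrow>q composes with the map to a valuation in a W*-algebra
   refuting q, while in a W*-algebra (p\<rightarrow>p)\<rightarrow>q and q coincide. *)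

definition regularize :: "'a qw \<Rightarrow> 'a \<Rightarrow> 'a" where
  "regularize A x = imp A (imp A (one A) (one A)) x"

definition regular_subalgebra :: "'a qw \<Rightarrow> 'a qw" where
  "regular_subalgebra A = A\<lparr>carrier := regularize A ` carrier A\<rparr>"

lemma qjoin_carrier_update [simp]: "qjoin (A\<lparr>carrier := S\<rparr>) = qjoin A"
  by (simp add: qjoin_def fun_eq_iff)

lemma eval_carrier_update [simp]: "eval (A\<lparr>carrier := S\<rparr>) v t = eval A v t"
  by (induction t) simp_all

locale qw_algebra =
  fixes A :: "'a qw"
  assumes qwstar: "qwstar A"
begin

lemma one_closed [simp]: "one A \<in> carrier A"
  using qwstar unfolding qwstar_def by (elim conjE)

lemma imp_closed [simp]: "x \<in> carrier A \<Longrightarrow> y \<in> carrier A \<Longrightarrow> imp A x y \<in> carrier A"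
  using qwstar[unfolded qwstar_def, THEN conjunct2, THEN conjunct1] by blast

lemma neg_closed [simp]: "x \<in> carrier A \<Longrightarrow> neg A x \<in> carrier A"
  and pos_closed [simp]: "x \<in> carrier A \<Longrightarrow> pos A x \<in> carrier A"
  and mns_closed [simp]: "x \<in> carrier A \<Longrightarrow> mns A x \<in> carrier A"
  using qwstar[unfolded qwstar_def, THEN conjunct2, THEN conjunct2, THEN conjunct1] by blast+

lemmas identities = qwstar[unfolded qwstar_def, THEN conjunct2, THEN conjunct2, THEN conjunct2, rule_format]

lemma qwstar_subalgebra:
  assumes "S \<subseteq> carrier A" "one A \<in> S"
    and "\<And>x y. x \<in> S \<Longrightarrow> y \<in> S \<Longrightarrow> imp A x y \<in> S"
    and "\<And>x. x \<in> S \<Longrightarrow> neg A x \<in> S" "\<And>x. x \<in> S \<Longrightarrow> pos A x \<in> S" "\<And>x. x \<in> S \<Longrightarrow> mns A x \<in> S"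
  shows "qwstar (A\<lparr>carrier := S\<rparr>)"
  unfolding qwstar_def
  apply (simp add: assms(2-))
  apply (intro ballI identities)
  using assms(1) by auto

lemma imp_contrapos:
  assumes "x \<in> carrier A" "y \<in> carrier A"
  shows "imp A x y = imp A (neg A y) (neg A x)"
  using identities[OF assms assms(1)] by (elim conjE)

lemma imp_imp_one_one:
  assumes "x \<in> carrier A"
  shows "imp A (imp A (one A) x) (one A) = one A"
  using identities[OF assms assms assms] by (elim conjE)

lemma imp_self_imp:
  assumes "x \<in> carrier A" "y \<in> carrier A" "z \<in> carrier A"
  shows "imp A (imp A z z) (imp A x y) = imp A x y"
  using identities[OF assms] by (elim conjE)

lemma regularize_pos:
  assumes "x \<in> carrier A"
  shows "regularize A (pos A x) = pos A (regularize A x)"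
  using identities[OF assms assms assms] unfolding regularize_def by (elim conjE)

lemma regularize_mns:
  assumes "x \<in> carrier A"
  shows "regularize A (mns A x) = mns A (regularize A x)"
  using identities[OF assms assms assms] unfolding regularize_def by (elim conjE)

lemma imp_eq_pos_mns:
  assumes "x \<in> carrier A" "y \<in> carrier A"
  shows "imp A x y = imp A (imp A (pos A y) (mns A x)) (imp A (pos A x) (mns A y))"
  using identities[OF assms assms(1)] by (elim conjE)

lemma neg_imp:
  assumes "x \<in> carrier A" "y \<in> carrier A"
  shows "neg A (imp A x y) = imp A y x"
  using identities[OF assms assms(1)] by (elim conjE)

lemma neg_neg:
  assumes "x \<in> carrier A"
  shows "neg A (neg A x) = x"
  using identities[OF assms assms assms] by (elim conjE)

lemma regularize_closed [simp]: "x \<in> carrier A \<Longrightarrow> regularize A x \<in> carrier A"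
  by (simp add: regularize_def)

lemma regularize_one: "regularize A (one A) = one A"
  unfolding regularize_def by (rule imp_imp_one_one) simp_all

lemma regularize_imp:
  "x \<in> carrier A \<Longrightarrow> y \<in> carrier A \<Longrightarrow> regularize A (imp A x y) = imp A x y"
  unfolding regularize_def by (rule imp_self_imp) simp_all

lemma regularize_neg:
  assumes x: "x \<in> carrier A"
  shows "regularize A (neg A x) = neg A (regularize A x)"
proof -
  have "regularize A (neg A x) = imp A (neg A (neg A x)) (neg A (imp A (one A) (one A)))"
    unfolding regularize_def by (rule imp_contrapos) (simp_all add: x)
  also have "\<dots> = imp A x (imp A (one A) (one A))"
    by (simp add: x neg_neg neg_imp)
  also have "\<dots> = neg A (regularize A x)"
    unfolding regularize_def by (simp add: x neg_imp)
  finally show ?thesis .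
qed

lemma wstar_regular_subalgebra: "wstar (regular_subalgebra A)"
proof -
  let ?S = "regularize A ` carrier A"
  have "qwstar (A\<lparr>carrier := ?S\<rparr>)"
  proof (rule qwstar_subalgebra)
    show "?S \<subseteq> carrier A" by auto
    show "one A \<in> ?S" by (metis one_closed regularize_one image_eqI)
    show "imp A x y \<in> ?S" if "x \<in> ?S" "y \<in> ?S" for x y
    proof -
      from that have "x \<in> carrier A" "y \<in> carrier A" by auto
      then show ?thesis by (metis imp_closed regularize_imp image_eqI)
    qed
    show "neg A x \<in> ?S" "pos A x \<in> ?S" "mns A x \<in> ?S" if "x \<in> ?S" for x
      using that by (auto simp flip: regularize_neg regularize_pos regularize_mns)
  qed
  moreover have "imp A (imp A y y) x = x" if "x \<in> ?S" "y \<in> ?S" for x y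
    \<comment> \<open>x is an implication\<close>
    using that unfolding regularize_def by (auto intro: imp_self_imp)
  ultimately show ?thesis
    unfolding wstar_def regular_subalgebra_def by simp
qed

lemma eval_closed: "(\<And>n. v n \<in> carrier A) \<Longrightarrow> eval A v t \<in> carrier A"
  by (induction t) simp_all

end

locale sqw_algebra =
  fixes A :: "'a qw"
  assumes sqwstar: "sqwstar A"

sublocale sqw_algebra \<subseteq> qw_algebra
  using sqwstar unfolding sqwstar_def by unfold_locales (elim conjE)

context sqw_algebra
begin

lemma regularize_pos_id: "x \<in> carrier A \<Longrightarrow> regularize A (pos A x) = pos A x"
  and regularize_mns_id: "x \<in> carrier A \<Longrightarrow> regularize A (mns A x) = mns A x"
  using sqwstar unfolding sqwstar_def regularize_def by metis+

lemma imp_regularize: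
  assumes x: "x \<in> carrier A" and y: "y \<in> carrier A"
  shows "imp A (regularize A x) (regularize A y) = imp A x y"
proof -
  \<comment> \<open>x \<rightarrow> y only depends on the images of x and y under pos and mns\<close>
  have pos_mns: "pos A (regularize A u) = pos A u" "mns A (regularize A u) = mns A u"
    if "u \<in> carrier A" for u
    using that by (simp_all flip: regularize_pos regularize_mns add: regularize_pos_id regularize_mns_id)
  have "imp A (regularize A x) (regularize A y)
      = imp A (imp A (pos A (regularize A y)) (mns A (regularize A x)))
          (imp A (pos A (regularize A x)) (mns A (regularize A y)))"
    by (rule imp_eq_pos_mns) (simp_all add: x y)
  also have "\<dots> = imp A (imp A (pos A y) (mns A x)) (imp A (pos A x) (mns A y))"
    by (simp add: x y pos_mns)
  also have "\<dots> = imp A x y"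
    by (rule imp_eq_pos_mns[symmetric]) (simp_all add: x y)
  finally show ?thesis .
qed

lemma imp_self_eq_regularize:
  assumes x: "x \<in> carrier A" and y: "y \<in> carrier A"
  shows "imp A (imp A x x) y = regularize A y"
proof -
  have "imp A (imp A x x) y = imp A (regularize A (imp A x x)) (regularize A y)"
    by (simp add: imp_regularize x y)
  also have "\<dots> = regularize A y"
    unfolding regularize_imp[OF x x] unfolding regularize_def by (rule imp_self_imp) (simp_all add: x y)
  finally show ?thesis .
qed

lemma eval_Imp_self:
  "(\<And>n. v n \<in> carrier A) \<Longrightarrow> eval A v (Imp (Imp p p) q) = regularize A (eval A v q)"
  by (simp add: imp_self_eq_regularize eval_closed)

lemma eval_regularize:
  assumes "\<And>n. v n \<in> carrier A"
  shows "eval A (regularize A \<circ> v) t = regularize A (eval A v t)"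
  by (induction t) (simp_all add: assms eval_closed imp_regularize regularize_imp
      regularize_neg regularize_pos regularize_mns regularize_one)

lemma regularize_eval_regular:
  assumes "\<And>n. v n \<in> carrier A" "regular t"
  shows "regularize A (eval A v t) = eval A v t"
  using assms(2)
  by (induction t) (simp_all add: assms(1) eval_closed regularize_imp regularize_neg
      regularize_pos_id regularize_mns_id regularize_one)

lemma regularize_designated: "designated A x \<Longrightarrow> regularize A x = x"
  unfolding designated_def by (auto simp: regularize_imp)

lemma designated_regular_subalgebra_iff:
  "designated (regular_subalgebra A) x \<longleftrightarrow> designated A x"
proof
  assume "designated (regular_subalgebra A) x"
  then show "designated A x"
    unfolding designated_def regular_subalgebra_def by auto
next
  assume "designated A x"
  then obtain c where c: "c \<in> carrier A" "x = imp A (imp A c (one A)) (one A)"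
    unfolding designated_def by blast
  then have "x = imp A (imp A (regularize A c) (one A)) (one A)"
    using imp_regularize[OF c(1) one_closed] by (simp add: regularize_one)
  with c(1) show "designated (regular_subalgebra A) x"
    unfolding designated_def regular_subalgebra_def by auto
qed

lemma wstar_conseq_regularize_designated:
  assumes "conseq (wstar :: 'a qw \<Rightarrow> bool) qs q" "\<And>n. v n \<in> carrier A"
    and "\<forall>s\<in>set qs. designated A (eval A v s)"
  shows "designated A (regularize A (eval A v q))"
proof -
  let ?B = "regular_subalgebra A" and ?w = "regularize A \<circ> v"
  have eval_B: "eval ?B ?w t = regularize A (eval A v t)" for t
    unfolding regular_subalgebra_def by (simp add: eval_regularize assms(2))
  have "\<forall>n. ?w n \<in> carrier ?B"
    unfolding regular_subalgebra_def by (simp add: assms(2))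
  moreover have "\<forall>s\<in>set qs. designated ?B (eval ?B ?w s)"
    using assms(3) by (simp add: eval_B regularize_designated designated_regular_subalgebra_iff)
  ultimately have "designated ?B (eval ?B ?w q)"
    using assms(1) wstar_regular_subalgebra unfolding conseq_def by blast
  then show ?thesis
    by (simp add: eval_B designated_regular_subalgebra_iff)
qed

end

lemma qw_algebra_if_wstar: "wstar A \<Longrightarrow> qw_algebra A"
  unfolding wstar_def by unfold_locales blast

lemma sqwstar_if_wstar:
  assumes "wstar A"
  shows "sqwstar A"
proof -
  interpret qw_algebra A
    using assms by (rule qw_algebra_if_wstar)
  show ?thesis
    using assms unfolding wstar_def sqwstar_def by simp
qed

lemma eval_Imp_self_wstar:
  assumes "wstar A" "\<forall>n. v n \<in> carrier A"
  shows "eval A v (Imp (Imp p p) q) = eval A v q"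
proof -
  interpret qw_algebra A
    using assms(1) by (rule qw_algebra_if_wstar)
  show ?thesis
    using assms unfolding wstar_def by (simp add: eval_closed)
qed

lemma conseq_antimono:
  "conseq K' qs t \<Longrightarrow> (\<And>A. K A \<Longrightarrow> K' A) \<Longrightarrow> conseq K qs t"
  unfolding conseq_def by blast

lemma conseq_cong:
  assumes "\<And>A v. K A \<Longrightarrow> (\<forall>n. v n \<in> carrier A) \<Longrightarrow> eval A v t = eval A v t'"
  shows "conseq K qs t \<longleftrightarrow> conseq K qs t'"
  using assms unfolding conseq_def by metis

lemma conseq_wstar_iff_sqwstar_Imp_self:
  "conseq (wstar :: 'a qw \<Rightarrow> bool) qs q \<longleftrightarrow> conseq (sqwstar :: 'a qw \<Rightarrow> bool) qs (Imp (Imp p p) q)"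
proof
  assume w: "conseq (wstar :: 'a qw \<Rightarrow> bool) qs q"
  show "conseq (sqwstar :: 'a qw \<Rightarrow> bool) qs (Imp (Imp p p) q)"
    unfolding conseq_def
  proof (intro allI impI, elim conjE)
    fix A :: "'a qw" and v :: "nat \<Rightarrow> 'a"
    assume "sqwstar A" and v: "\<forall>n. v n \<in> carrier A"
      and hyps: "\<forall>s\<in>set qs. designated A (eval A v s)"
    then interpret sqw_algebra A by unfold_locales
    show "designated A (eval A v (Imp (Imp p p) q))"
      unfolding eval_Imp_self[OF v[rule_format]]
      using wstar_conseq_regularize_designated[OF w _ hyps] v by blast
  qed
next
  assume "conseq (sqwstar :: 'a qw \<Rightarrow> bool) qs (Imp (Imp p p) q)"
  then have "conseq (wstar :: 'a qw \<Rightarrow> bool) qs (Imp (Imp p p) q)"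
    by (rule conseq_antimono) (rule sqwstar_if_wstar)
  then show "conseq (wstar :: 'a qw \<Rightarrow> bool) qs q"
    using conseq_cong[of wstar "Imp (Imp p p) q" q qs] eval_Imp_self_wstar by blast
qed

lemma conseq_sqwstar_Imp_self_regular:
  assumes "regular q"
  shows "conseq (sqwstar :: 'a qw \<Rightarrow> bool) qs (Imp (Imp p p) q)
    \<longleftrightarrow> conseq (sqwstar :: 'a qw \<Rightarrow> bool) qs q"
proof (rule conseq_cong)
  fix A :: "'a qw" and v :: "nat \<Rightarrow> 'a"
  assume "sqwstar A" and v: "\<forall>n. v n \<in> carrier A"
  then interpret sqw_algebra A by unfold_locales
  show "eval A v (Imp (Imp p p) q) = eval A v q"
    unfolding eval_Imp_self[OF v[rule_format]]
    by (rule regularize_eval_regular) (use v assms in auto)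
qed

theorem lemma3p5:
  fixes qs :: "trm list" and q p :: trm
  shows "(conseq (sqwstar :: 'a qw \<Rightarrow> bool) qs q \<longrightarrow> conseq (wstar :: 'a qw \<Rightarrow> bool) qs q)
    \<and> (conseq (wstar :: 'a qw \<Rightarrow> bool) qs q
         \<longleftrightarrow> conseq (sqwstar :: 'a qw \<Rightarrow> bool) qs (Imp (Imp p p) q))
    \<and> (regular q \<longrightarrow>
         (conseq (wstar :: 'a qw \<Rightarrow> bool) qs q \<longleftrightarrow> conseq (sqwstar :: 'a qw \<Rightarrow> bool) qs q))"
proof -
  have "conseq (sqwstar :: 'a qw \<Rightarrow> bool) qs q \<longrightarrow> conseq (wstar :: 'a qw \<Rightarrow> bool) qs q"
    using conseq_antimono sqwstar_if_wstar by blast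
  then show ?thesis
    using conseq_wstar_iff_sqwstar_Imp_self conseq_sqwstar_Imp_self_regular by blast
qed

end
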